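(* Consider a node $u$ in the distributed quantum routing model, a subset $X\subseteq\{1,\dots,\deg(u)\}$ of its ports, and a function $f:X\to\{0,1\}$ such that $u$ can evaluate $f(x)$ in $O(1)$ rounds by sending $O(1)$ messages, for any given $x\in X$, and such that $f$ does not change during the execution. Let $C_u=|f^{-1}(1)|$. Then there is a distributed quantum algorithm $\mathsf{IteratedQuantumSearch}$, invoked by $u$, that returns all elements $x\in X$ with $f(x)=1$ with high probability, and whose round complexity and quantum message complexity are $O\left(\sqrt{|X|\max\{C_u,1\}}\cdot\log n\right)$.
   Context: Network of $n$ nodes in the synchronous port numbering model with quantum routing: adjacent nodes share a classical link and a quantum channel; a node accesses neighbors through ports $1,\dots,\deg(u)$. Quantum message complexity counts, per round, the maximum number of quantum messages over all computational-basis configurations of the global state, summed over rounds. It is known (and may be used) that there is a procedure $\mathsf{QuantumSearch}(f,X)$ invoked by $u$ which, with high probability, returns some element of $f^{-1}(1)$ if $C_u>0$ and returns NULL otherwise, with quantum message complexity and time complexity $O\left(\sqrt{|X|/\max\{1,C_u\}}\cdot\log n\right)$, as long as $f$ does not change during the invocation; its failure probability can be made at most $1/n^{c'}$ for any constant $c'$. "With high probability" means with probability at least $1-1/n^c$ for a constant $c>0$. *)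

theory Defs
  imports "HOL-Probability.Probability"
begin

text \<open>Abstract model of node u's computation. u may (i) evaluate f at a port x
(O(1) rounds/messages), (ii) invoke QuantumSearch with accuracy constant c' on the
function f_S (x \<mapsto> f x \<and> x \<notin> S, locally evaluable since u knows S) over X,
(iii) stop with an output. An algorithm is an adaptive strategy on the history of
responses; it is chosen uniformly (it knows n and X but not f).\<close>

datatype action = Eval nat | Search nat "nat set" | Output "nat set"
datatype resp = REval bool | RSearch "nat option"

definition add_cost :: "real \<times> real \<Rightarrow> nat set option \<times> real \<times> real \<Rightarrow> nat set option \<times> real \<times> real" where
  "add_cost c t = (fst t, fst (snd t) + fst c, snd (snd t) + snd c)"

text \<open>Execution with a fuel bound; running out of fuel counts as failure (output None).
The result is a distribution over (output, total rounds, total quantum messages).\<close>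
fun exec :: "(resp list \<Rightarrow> action) \<Rightarrow> (nat \<Rightarrow> bool) \<Rightarrow> (nat \<Rightarrow> nat set \<Rightarrow> nat option pmf)
   \<Rightarrow> (nat \<Rightarrow> real \<times> real) \<Rightarrow> (nat \<Rightarrow> nat set \<Rightarrow> real \<times> real) \<Rightarrow> nat \<Rightarrow> resp list
   \<Rightarrow> (nat set option \<times> real \<times> real) pmf" where
  "exec alg f QS ecost scost 0 h = return_pmf (None, 0, 0)"
| "exec alg f QS ecost scost (Suc k) h =
     (case alg h of
        Output A \<Rightarrow> return_pmf (Some A, 0, 0)
      | Eval x \<Rightarrow> map_pmf (add_cost (ecost x)) (exec alg f QS ecost scost k (h @ [REval (f x)]))
      | Search c S \<Rightarrow> bind_pmf (QS c S)
           (\<lambda>r. map_pmf (add_cost (scost c S)) (exec alg f QS ecost scost k (h @ [RSearch r]))))"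

definition search_correct :: "nat set \<Rightarrow> (nat \<Rightarrow> bool) \<Rightarrow> nat set \<Rightarrow> nat option \<Rightarrow> bool" where
  "search_correct X f S r =
     (if (\<exists>x\<in>X. f x \<and> x \<notin> S) then (\<exists>x. r = Some x \<and> x \<in> X \<and> f x \<and> x \<notin> S) else r = None)"

definition search_oracle :: "nat \<Rightarrow> nat set \<Rightarrow> (nat \<Rightarrow> bool) \<Rightarrow> (nat \<Rightarrow> nat set \<Rightarrow> nat option pmf)
     \<Rightarrow> (nat \<Rightarrow> real) \<Rightarrow> (nat \<Rightarrow> nat set \<Rightarrow> real \<times> real) \<Rightarrow> bool" where
  "search_oracle n X f QS Kq scost =
    (\<forall>c S. measure_pmf.prob (QS c S) {r. search_correct X f S r} \<ge> 1 - 1 / real n ^ c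
      \<and> fst (scost c S) \<le> Kq c * sqrt (real (card X) / max 1 (real (card {x\<in>X. f x \<and> x \<notin> S}))) * ln (real n)
      \<and> snd (scost c S) \<le> Kq c * sqrt (real (card X) / max 1 (real (card {x\<in>X. f x \<and> x \<notin> S}))) * ln (real n))"

definition eval_costs :: "real \<Rightarrow> (nat \<Rightarrow> real \<times> real) \<Rightarrow> bool" where
  "eval_costs Ke ecost = (\<forall>x. fst (ecost x) \<le> Ke \<and> snd (ecost x) \<le> Ke)"

end

theory Submission
  imports Defs
begin

text \<open>Node u repeatedly runs QuantumSearch for a marked port it has not collected yet, verifies
each answer by evaluating f there, and stops at the first answer that is NULL or fails
verification. While m marked ports are still missing, a search costs
O(sqrt(|X|/m) log n); since the sum of 1/sqrt m for m = 1..C is at most 2 sqrt C, the searches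
cost O(sqrt(|X| C) log n) in total, and the at most C verifications cost O(C), which is
O(sqrt(|X| C)) as C is at most |X|. The run fails only if one of its at most C + 1 searches
errs, so running each search with failure probability n^-(ceiling c + 1) and taking a union
bound over at most n searches gives success probability 1 - n^-c.\<close>

lemma prob_bind_pmf_le:
  fixes M :: "'a pmf" and N :: "'a \<Rightarrow> 'b pmf"
  assumes "\<And>r. r \<in> set_pmf M \<Longrightarrow> measure_pmf.prob (N r) B \<le> (if P r then a else 1)"
    and "a \<ge> 0"
  shows "measure_pmf.prob (bind_pmf M N) B \<le> a + measure_pmf.prob M {r. \<not> P r}"
proof -
  have "emeasure (bind_pmf M N) B = (\<integral>\<^sup>+r. emeasure (N r) B \<partial>M)"
    by simp
  also have "\<dots> \<le> (\<integral>\<^sup>+r. (ennreal a + indicator {r. \<not> P r} r) \<partial>M)"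
  proof (rule nn_integral_mono_AE, rule AE_pmfI)
    fix r assume "r \<in> set_pmf M"
    then have "emeasure (N r) B \<le> ennreal (if P r then a else 1)"
      using assms(1) by (simp add: measure_pmf.emeasure_eq_measure ennreal_leI)
    also have "\<dots> \<le> ennreal a + indicator {r. \<not> P r} r"
      by (auto simp: indicator_def)
    finally show "emeasure (N r) B \<le> ennreal a + indicator {r. \<not> P r} r" .
  qed
  also have "\<dots> = ennreal (a + measure_pmf.prob M {r. \<not> P r})"
    using \<open>a \<ge> 0\<close>
    by (simp add: nn_integral_add measure_pmf.emeasure_eq_measure ennreal_plus[symmetric] del: ennreal_plus)
  finally show ?thesis
    using \<open>a \<ge> 0\<close>
    by (simp add: measure_pmf.emeasure_eq_measure ennreal_plus[symmetric] ennreal_le_iff del: ennreal_plus)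
qed

lemma inverse_sqrt_plus_two_sqrt_diff_one_le:
  fixes m :: real
  assumes "m \<ge> 1"
  shows "1 / sqrt m + 2 * sqrt (m - 1) \<le> 2 * sqrt m"
proof -
  define s where "s = sqrt m"
  have "s \<ge> 1" and m: "m = s * s"
    using assms by (simp_all add: s_def)
  have "sqrt (m - 1) \<le> s - 1 / (2 * s)"
  proof (rule real_le_lsqrt)
    have "1 / (2 * s) \<le> 1"
      using \<open>s \<ge> 1\<close> by simp
    then show "0 \<le> s - 1 / (2 * s)"
      using \<open>s \<ge> 1\<close> by linarith
    have "(s - 1 / (2 * s))\<^sup>2 = m - 1 + 1 / (4 * (s * s))"
      using \<open>s \<ge> 1\<close> by (simp add: m power2_eq_square field_simps)
    then show "m - 1 \<le> (s - 1 / (2 * s))\<^sup>2"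
      by simp
  qed
  then show ?thesis
    using \<open>s \<ge> 1\<close> by (simp add: s_def[symmetric] field_simps)
qed

definition outcome_bounded :: "(nat set option \<times> real \<times> real) pmf \<Rightarrow> nat set \<Rightarrow> real \<Rightarrow> real \<Rightarrow> bool"
  where "outcome_bounded D T q b \<longleftrightarrow>
    measure_pmf.prob D {t. fst t \<noteq> Some T} \<le> q \<and>
    (\<forall>t\<in>set_pmf D. fst (snd t) \<le> b \<and> snd (snd t) \<le> b)"

lemma outcome_bounded_mono:
  "outcome_bounded D T q b \<Longrightarrow> q \<le> q' \<Longrightarrow> b \<le> b' \<Longrightarrow> outcome_bounded D T q' b'"
  unfolding outcome_bounded_def by force

lemma outcome_bounded_return:
  assumes "q \<ge> 0" "b \<ge> 0" "A = Some T \<or> q \<ge> 1"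
  shows "outcome_bounded (return_pmf (A, 0, 0)) T q b"
  using assms by (auto simp: outcome_bounded_def indicator_def)

lemma outcome_bounded_add_cost:
  assumes "outcome_bounded D T q b" "fst c \<le> e" "snd c \<le> e"
  shows "outcome_bounded (map_pmf (add_cost c) D) T q (e + b)"
proof -
  have "add_cost c -` {t. fst t \<noteq> Some T} = {t. fst t \<noteq> Some T}"
    by (auto simp: add_cost_def)
  then show ?thesis
    using assms by (auto simp: outcome_bounded_def add_cost_def)
qed

lemma outcome_bounded_bind:
  assumes "\<And>r. r \<in> set_pmf M \<Longrightarrow> outcome_bounded (N r) T (if P r then a else 1) b"
    and "a \<ge> 0" and "measure_pmf.prob M {r. \<not> P r} \<le> q"
  shows "outcome_bounded (bind_pmf M N) T (a + q) b"
proof -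
  have "measure_pmf.prob (bind_pmf M N) {t. fst t \<noteq> Some T} \<le> a + measure_pmf.prob M {r. \<not> P r}"
    using assms(1,2) by (intro prob_bind_pmf_le) (auto simp: outcome_bounded_def)
  then show ?thesis
    using assms unfolding outcome_bounded_def by fastforce
qed

lemma outcome_bounded_success:
  assumes "outcome_bounded D T q b"
  shows "measure_pmf.prob D {t. fst t = Some T} \<ge> 1 - q"
proof -
  have "measure_pmf.prob D {t. fst t = Some T} = 1 - measure_pmf.prob D {t. fst t \<noteq> Some T}"
    using measure_pmf.prob_compl[of "{t. fst t \<noteq> Some T}" D]
    by (simp add: set_diff_eq)
  then show ?thesis
    using assms by (simp add: outcome_bounded_def)
qed

datatype search_state = Searching "nat set" | Checking "nat set" nat | Finished "nat set"

text \<open>In state \<open>Searching S\<close>, S holds the verified marked ports; \<open>Checking S x\<close> waits for the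
value of f at the candidate x returned by the last search. Histories that the algorithm
cannot produce lead to \<open>Finished {}\<close>.\<close>

fun next_state :: "nat set \<Rightarrow> search_state \<Rightarrow> resp \<Rightarrow> search_state" where
  "next_state X (Searching S) (RSearch None) = Finished S"
| "next_state X (Searching S) (RSearch (Some x)) =
     (if x \<in> X \<and> x \<notin> S then Checking S x else Finished S)"
| "next_state X (Checking S x) (REval b) = (if b then Searching (insert x S) else Finished S)"
| "next_state X s r = Finished {}"

fun state_action :: "nat \<Rightarrow> search_state \<Rightarrow> action" where
  "state_action c0 (Searching S) = Search c0 S"
| "state_action c0 (Checking S x) = Eval x"
| "state_action c0 (Finished S) = Output S"

definition initial_state :: "nat set \<Rightarrow> search_state" where
  "initial_state X = (if X = {} then Finished {} else Searching {})"

definition iterated_search :: "nat \<Rightarrow> nat set \<Rightarrow> resp list \<Rightarrow> action" where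
  "iterated_search c0 X h = state_action c0 (foldl (next_state X) (initial_state X) h)"

text \<open>Q bounds the cost of a search while one marked port is missing, E that of an evaluation.\<close>

definition cost_bound :: "real \<Rightarrow> real \<Rightarrow> nat \<Rightarrow> real" where
  "cost_bound Q E m = Q * (1 + 2 * sqrt (real m)) + E * (real m + 1)"

lemma cost_bound_step:
  assumes "Q \<ge> 0" "E \<ge> 0"
  shows "Q / sqrt (max 1 (real m)) + (E + (if m = 0 then 0 else cost_bound Q E (m - 1)))
    \<le> cost_bound Q E m"
proof (cases "m = 0")
  case False
  then have "real m \<ge> 1" and "real (m - 1) = real m - 1"
    by simp_all
  moreover have "Q * (1 / sqrt (real m) + 2 * sqrt (real m - 1)) \<le> Q * (2 * sqrt (real m))"
    using inverse_sqrt_plus_two_sqrt_diff_one_le[OF \<open>real m \<ge> 1\<close>] \<open>Q \<ge> 0\<close>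
    by (rule mult_left_mono)
  ultimately show ?thesis
    using False by (simp add: cost_bound_def max_def algebra_simps)
qed (simp add: cost_bound_def)

lemma cost_bound_le_sqrt:
  fixes N L A E :: real
  assumes "real C \<le> N" "1 \<le> N" "ln 2 \<le> L" "0 \<le> A" "0 \<le> E"
  shows "cost_bound (A * sqrt N * L) E C \<le> (3 * A + 2 * E / ln 2) * sqrt (N * max (real C) 1) * L"
proof -
  define M where "M = max (real C) 1"
  have "M \<ge> 1" "M \<le> N"
    using assms(1,2) by (simp_all add: M_def)
  have "L \<ge> 0"
    using assms(3) ln_ge_zero[of 2] by linarith
  have "sqrt (real C) \<le> sqrt M" "1 \<le> sqrt M"
    using \<open>M \<ge> 1\<close> by (simp_all add: M_def)
  then have "1 + 2 * sqrt (real C) \<le> 3 * sqrt M"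
    by linarith
  then have "A * sqrt N * L * (1 + 2 * sqrt (real C)) \<le> A * sqrt N * L * (3 * sqrt M)"
    using assms \<open>L \<ge> 0\<close> by (intro mult_left_mono) auto
  also have "\<dots> = 3 * A * sqrt (N * M) * L"
    by (simp add: real_sqrt_mult)
  finally have searches: "A * sqrt N * L * (1 + 2 * sqrt (real C)) \<le> 3 * A * sqrt (N * M) * L" .
  have "real C + 1 \<le> 2 * M"
    by (simp add: M_def)
  also have "\<dots> \<le> 2 * sqrt (N * M)"
    using \<open>M \<ge> 1\<close> \<open>M \<le> N\<close> by (simp add: real_le_rsqrt power2_eq_square)
  also have "\<dots> \<le> 2 * sqrt (N * M) * (L / ln 2)"
    using assms(3) \<open>M \<ge> 1\<close> \<open>M \<le> N\<close> by (simp add: le_divide_eq mult_left_mono)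
  finally have checks: "E * (real C + 1) \<le> E * (2 * sqrt (N * M) * (L / ln 2))"
    using \<open>E \<ge> 0\<close> by (rule mult_left_mono)
  show ?thesis
    using searches checks by (simp add: cost_bound_def M_def algebra_simps)
qed

lemma div_power_Suc_le_inverse_powr:
  fixes b x c :: real
  assumes "1 \<le> b" "x \<le> b" "c \<le> real j"
  shows "x / b ^ Suc j \<le> 1 / b powr c"
proof -
  have "x / b ^ Suc j \<le> b / b ^ Suc j"
    using assms by (intro divide_right_mono) auto
  also have "\<dots> = 1 / b powr real j"
    using assms(1) by (simp add: powr_realpow)
  also have "\<dots> \<le> 1 / b powr c"
    using assms by (intro divide_left_mono powr_mono) auto
  finally show ?thesis .
qed

locale iterated_search_run =
  fixes n :: nat and X :: "nat set" and f :: "nat \<Rightarrow> bool"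
    and QS :: "nat \<Rightarrow> nat set \<Rightarrow> nat option pmf" and Kq :: "nat \<Rightarrow> real"
    and scost :: "nat \<Rightarrow> nat set \<Rightarrow> real \<times> real" and Ke :: real
    and ecost :: "nat \<Rightarrow> real \<times> real" and c0 :: nat
  assumes quantum_search: "search_oracle n X f QS Kq scost"
    and eval: "eval_costs Ke ecost"
    and n_ge_2: "2 \<le> n"
    and finite_X: "finite X"
begin

abbreviation "marked \<equiv> {x\<in>X. f x}"
abbreviation "state h \<equiv> foldl (next_state X) (initial_state X) h"
abbreviation "run \<equiv> exec (iterated_search c0 X) f QS ecost scost"
abbreviation "p \<equiv> 1 / real n ^ c0"
abbreviation "Q \<equiv> max 0 (Kq c0) * sqrt (real (card X)) * ln (real n)"
abbreviation "E \<equiv> max 0 Ke"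

lemma run_Finished: "state h = Finished S \<Longrightarrow> run k h = return_pmf (if k = 0 then None else Some S, 0, 0)"
  by (cases k) (simp_all add: iterated_search_def)

lemma run_Searching:
  "state h = Searching S \<Longrightarrow>
   run (Suc k) h = bind_pmf (QS c0 S) (\<lambda>r. map_pmf (add_cost (scost c0 S)) (run k (h @ [RSearch r])))"
  by (simp add: iterated_search_def)

lemma run_Checking:
  "state h = Checking S x \<Longrightarrow> run (Suc k) h = map_pmf (add_cost (ecost x)) (run k (h @ [REval (f x)]))"
  by (simp add: iterated_search_def)

lemma search_failure_le: "measure_pmf.prob (QS c0 S) {r. \<not> search_correct X f S r} \<le> p"
proof -
  have "measure_pmf.prob (QS c0 S) {r. \<not> search_correct X f S r}
      = 1 - measure_pmf.prob (QS c0 S) {r. search_correct X f S r}"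
    using measure_pmf.prob_compl[of "{r. search_correct X f S r}" "QS c0 S"]
    by (simp add: set_diff_eq)
  then show ?thesis
    using quantum_search[unfolded search_oracle_def, rule_format, of c0 S] by linarith
qed

lemma search_cost_le:
  "fst (scost c0 S) \<le> Q / sqrt (max 1 (real (card (marked - S))))"
  "snd (scost c0 S) \<le> Q / sqrt (max 1 (real (card (marked - S))))"
proof -
  let ?r = "sqrt (real (card X) / max 1 (real (card (marked - S))))"
  have "Kq c0 * ?r * ln (real n) \<le> max 0 (Kq c0) * ?r * ln (real n)"
    using n_ge_2 by (intro mult_right_mono) auto
  also have "\<dots> = Q / sqrt (max 1 (real (card (marked - S))))"
    by (simp add: real_sqrt_divide)
  finally have "Kq c0 * ?r * ln (real n) \<le> Q / sqrt (max 1 (real (card (marked - S))))" .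
  moreover have "{x\<in>X. f x \<and> x \<notin> S} = marked - S"
    by auto
  ultimately show "fst (scost c0 S) \<le> Q / sqrt (max 1 (real (card (marked - S))))"
    "snd (scost c0 S) \<le> Q / sqrt (max 1 (real (card (marked - S))))"
    using quantum_search[unfolded search_oracle_def, rule_format, of c0 S] by auto
qed

lemma eval_cost_le: "fst (ecost x) \<le> E" "snd (ecost x) \<le> E"
  using eval by (auto simp: eval_costs_def intro: max.coboundedI2)

lemma Q_nonneg: "Q \<ge> 0"
  using n_ge_2 by simp

lemma run_after_search_response:
  assumes state: "state h = Searching S" and "S \<subseteq> marked" and "card (marked - S) = m"
    and "2 * m + 1 \<le> k"
    and IH: "\<And>S' h'. state h' = Searching S' \<Longrightarrow> S' \<subseteq> marked \<Longrightarrow> Suc (card (marked - S')) = m \<Longrightarrow>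
      outcome_bounded (run (k - 1) h') marked (real m * p) (cost_bound Q E (m - 1))"
  shows "outcome_bounded (run k (h @ [RSearch r])) marked
    (if search_correct X f S r then real m * p else 1) (E + (if m = 0 then 0 else cost_bound Q E (m - 1)))"
proof -
  let ?h = "h @ [RSearch r]"
  have "cost_bound Q E (m - 1) \<ge> 0"
    using Q_nonneg by (simp add: cost_bound_def)
  obtain k' where k: "k = Suc k'"
    using \<open>2 * m + 1 \<le> k\<close> by (cases k) auto
  consider (stop) "state ?h = Finished S" "\<nexists>x. r = Some x \<and> x \<in> X \<and> x \<notin> S"
    | (candidate) x where "r = Some x" "x \<in> X" "x \<notin> S" "state ?h = Checking S x"
    using state by (cases r; cases "\<exists>x. r = Some x \<and> x \<in> X \<and> x \<notin> S") auto
  then show ?thesis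
  proof cases
    case stop
    then have "search_correct X f S r \<Longrightarrow> S = marked"
      using \<open>S \<subseteq> marked\<close> by (auto simp: search_correct_def split: if_splits)
    moreover have "run k ?h = return_pmf (Some S, 0, 0)"
      using run_Finished[OF stop(1), of k] k by (simp del: exec.simps)
    ultimately show ?thesis
      using \<open>cost_bound Q E (m - 1) \<ge> 0\<close> by (auto intro!: outcome_bounded_return)
  next
    case candidate
    have run_k: "run k ?h = map_pmf (add_cost (ecost x)) (run k' (?h @ [REval (f x)]))"
      using run_Checking[OF candidate(4), of k'] k by (simp del: exec.simps)
    show ?thesis
    proof (cases "f x")
      case False
      then have "\<not> search_correct X f S r"
        using candidate by (auto simp: search_correct_def split: if_splits)
      have "state (?h @ [REval (f x)]) = Finished S"
        using candidate False by simp
      then have "outcome_bounded (run k' (?h @ [REval (f x)])) marked 1 0"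
        by (simp add: run_Finished outcome_bounded_return)
      then have "outcome_bounded (run k ?h) marked 1 (E + 0)"
        unfolding run_k by (rule outcome_bounded_add_cost) (rule eval_cost_le)+
      then show ?thesis
        using \<open>\<not> search_correct X f S r\<close> \<open>cost_bound Q E (m - 1) \<ge> 0\<close>
        by (auto elim: outcome_bounded_mono)
    next
      case True
      with candidate have "search_correct X f S r" and "x \<in> marked - S"
        by (auto simp: search_correct_def)
      moreover have "finite (marked - S)"
        using finite_X by simp
      ultimately have "Suc (card (marked - insert x S)) = m" and "m \<noteq> 0"
        using \<open>card (marked - S) = m\<close> by (metis Diff_insert card_Suc_Diff1, auto simp: card_gt_0_iff)
      moreover have "state (?h @ [REval (f x)]) = Searching (insert x S)"
        using candidate True by simp
      ultimately have "outcome_bounded (run k' (?h @ [REval (f x)])) marked (real m * p)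
          (cost_bound Q E (m - 1))"
        using IH \<open>S \<subseteq> marked\<close> \<open>x \<in> marked - S\<close> by (simp add: k)
      then have "outcome_bounded (run k ?h) marked (real m * p) (E + cost_bound Q E (m - 1))"
        unfolding run_k by (rule outcome_bounded_add_cost) (rule eval_cost_le)+
      then show ?thesis
        using \<open>search_correct X f S r\<close> \<open>m \<noteq> 0\<close> by simp
    qed
  qed
qed

lemma run_from_Searching:
  "state h = Searching S \<Longrightarrow> S \<subseteq> marked \<Longrightarrow> card (marked - S) = m \<Longrightarrow> 2 * m + 2 \<le> k \<Longrightarrow>
   outcome_bounded (run k h) marked ((real m + 1) * p) (cost_bound Q E m)"
proof (induction m arbitrary: S h k rule: less_induct)
  case (less m S h k)
  then obtain k' where k: "k = Suc k'"
    by (cases k) auto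
  have "outcome_bounded (run k' (h @ [RSearch r])) marked
      (if search_correct X f S r then real m * p else 1) (E + (if m = 0 then 0 else cost_bound Q E (m - 1)))"
    for r
  proof (rule run_after_search_response[OF less.prems(1-3)])
    show "2 * m + 1 \<le> k'"
      using less.prems(4) k by simp
    fix S' h' assume "state h' = Searching S'" "S' \<subseteq> marked" "Suc (card (marked - S')) = m"
    then show "outcome_bounded (run (k' - 1) h') marked (real m * p) (cost_bound Q E (m - 1))"
      using less.IH[of "m - 1" h' S' "k' - 1"] less.prems(4) k by (simp add: of_nat_diff)
  qed
  then have "outcome_bounded (map_pmf (add_cost (scost c0 S)) (run k' (h @ [RSearch r]))) marked
      (if search_correct X f S r then real m * p else 1)
      (Q / sqrt (max 1 (real m)) + (E + (if m = 0 then 0 else cost_bound Q E (m - 1))))"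
    for r
    using search_cost_le[of S] less.prems(3) by (intro outcome_bounded_add_cost) auto
  then have "outcome_bounded (run k h) marked (real m * p + p)
      (Q / sqrt (max 1 (real m)) + (E + (if m = 0 then 0 else cost_bound Q E (m - 1))))"
    unfolding k run_Searching[OF less.prems(1)]
    by (rule outcome_bounded_bind[OF _ _ search_failure_le]) simp
  moreover have "real m * p + p \<le> (real m + 1) * p"
    by (simp add: add_divide_distrib)
  moreover have "Q / sqrt (max 1 (real m)) + (E + (if m = 0 then 0 else cost_bound Q E (m - 1)))
      \<le> cost_bound Q E m"
    using Q_nonneg by (intro cost_bound_step) auto
  ultimately show ?case
    by (rule outcome_bounded_mono)
qed

lemma run_iterated_search:
  assumes "X \<noteq> {}"
  shows "outcome_bounded (run (2 * card X + 2) []) marked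
    ((real (card marked) + 1) * p) (cost_bound Q E (card marked))"
proof -
  have "card marked \<le> card X"
    using finite_X by (intro card_mono) auto
  then show ?thesis
    using assms by (intro run_from_Searching) (auto simp: initial_state_def)
qed

end

lemma iterated_search_guarantee:
  assumes "2 \<le> n" "d < n" "X \<subseteq> {1..d}" "search_oracle n X f QS Kq scost" "eval_costs Ke ecost"
    and "c \<le> real j"
  defines "D \<equiv> exec (iterated_search (Suc j) X) f QS ecost scost (2 * card X + 2) []"
    and "B \<equiv> (3 * max 0 (Kq (Suc j)) + 2 * max 0 Ke / ln 2)
      * sqrt (real (card X) * max (real (card {x\<in>X. f x})) 1) * ln (real n)"
  shows "measure_pmf.prob D {t. fst t = Some {x\<in>X. f x}} \<ge> 1 - 1 / real n powr c
    \<and> (\<forall>t\<in>set_pmf D. fst (snd t) \<le> B \<and> snd (snd t) \<le> B)"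
proof -
  interpret iterated_search_run n X f QS Kq scost Ke ecost "Suc j"
    using assms by unfold_locales (auto intro: finite_subset)
  show ?thesis
  proof (cases "X = {}")
    case True
    then have "state [] = Finished {}"
      by (simp add: initial_state_def)
    then have "D = return_pmf (Some {}, 0, 0)"
      unfolding D_def by (simp add: run_Finished del: exec.simps)
    then show ?thesis
      using True by (simp add: B_def)
  next
    case False
    have "card marked \<le> card X" "card X \<le> d"
      using finite_X card_mono[OF _ \<open>X \<subseteq> {1..d}\<close>] by (auto intro: card_mono)
    then have "(real (card marked) + 1) * p \<le> 1 / real n powr c"
      using assms(1,2,6) div_power_Suc_le_inverse_powr[of "real n" "real (card marked) + 1" c j]
      by simp
    moreover have "cost_bound Q E (card marked) \<le> B"
      unfolding B_def using \<open>card marked \<le> card X\<close> False finite_X n_ge_2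
      by (intro cost_bound_le_sqrt) (auto simp: Suc_le_eq card_gt_0_iff)
    ultimately have "outcome_bounded D marked (1 / real n powr c) B"
      unfolding D_def using run_iterated_search[OF False] by (rule outcome_bounded_mono[rotated])
    then show ?thesis
      using outcome_bounded_success by (auto simp: outcome_bounded_def)
  qed
qed

theorem lemma4:
  fixes c :: real
  assumes "c > 0"
  shows "\<exists>(alg :: nat \<Rightarrow> nat set \<Rightarrow> resp list \<Rightarrow> action) (fuel :: nat \<Rightarrow> nat set \<Rightarrow> nat).
    \<forall>(Kq :: nat \<Rightarrow> real) (Ke :: real). \<exists>K :: real.
    \<forall>(n :: nat) (d :: nat) (X :: nat set) (f :: nat \<Rightarrow> bool) QS ecost scost.
      2 \<le> n \<and> d < n \<and> X \<subseteq> {1..d} \<and> search_oracle n X f QS Kq scost \<and> eval_costs Ke ecost \<longrightarrow>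
      (let D = exec (alg n X) f QS ecost scost (fuel n X) [];
           C = card {x\<in>X. f x};
           B = K * sqrt (real (card X) * max (real C) 1) * ln (real n)
       in measure_pmf.prob D {t. fst t = Some {x\<in>X. f x}} \<ge> 1 - 1 / real n powr c
          \<and> (\<forall>t\<in>set_pmf D. fst (snd t) \<le> B \<and> snd (snd t) \<le> B))"
proof -
  have "c \<le> real (nat \<lceil>c\<rceil>)"
    by linarith
  note guarantee = iterated_search_guarantee[OF _ _ _ _ _ this]
  show ?thesis
    unfolding Let_def
    apply (rule exI[of _ "\<lambda>n X. iterated_search (Suc (nat \<lceil>c\<rceil>)) X"])
    apply (rule exI[of _ "\<lambda>n X. 2 * card X + 2"])
    apply (intro allI)
    apply (rule_tac x = "3 * max 0 (Kq (Suc (nat \<lceil>c\<rceil>))) + 2 * max 0 Ke / ln 2" in exI)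
    using guarantee by blast
qed

end
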